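(* Let $d_1,d_2\in\mathbb N$, $d=d_1+d_2$, and write $\mathbb R^d=\mathbb R^{d_1}\times\mathbb R^{d_2}$, with $\pi_1:\mathbb R^d\to\mathbb R^{d_1}$ the orthogonal projection. Let $K\subseteq\mathbb R^d$ be an origin-symmetric convex body and let $T=T_1\times\mathbb R^{d_2}$, where $T_1\subseteq\mathbb R^{d_1}$ is a convex body. For $s\in\mathbb R^{d_1}$ define $f(s)=\gamma_{d_2}(\{y\in\mathbb R^{d_2}:(s,y)\in K\})$. Assume that for every $z>0$, the set $A_z=\{s\in\pi_1(K): f(s)\ge z\}$ satisfies \[ \gamma_{d_1}(\mathrm{conv}\{A_z\cup T_1\})\,\gamma_{d_1}(A_z\cap T_1)\ge \gamma_{d_1}(A_z)\,\gamma_{d_1}(T_1). \] Then \[ \gamma_{d}(\mathrm{conv}\{K\cup T\})\,\gamma_{d}(K\cap T)\ge \gamma_{d}(K)\,\gamma_{d}(T). \]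
   Context: $\gamma_m$ denotes the standard Gaussian probability measure on $\mathbb R^m$, with density proportional to $e^{-\|x\|^2/2}$. $\mathrm{conv}\{S\}$ is the convex hull of $S$. A set $K$ is origin-symmetric if $K=-K$. *)

theory Defs
  imports "HOL-Analysis.Analysis"
begin

definition std_gaussian :: "'a::euclidean_space measure" where
  "std_gaussian = density lebesgue
     (\<lambda>x. ennreal (exp (- (norm x)\<^sup>2 / 2) / (2 * pi) powr (real DIM('a) / 2)))"

definition gauss :: "'a::euclidean_space set \<Rightarrow> real" where
  "gauss S = measure std_gaussian S"

definition convex_body :: "'a::euclidean_space set \<Rightarrow> bool" where
  "convex_body K \<longleftrightarrow> compact K \<and> convex K \<and> interior K \<noteq> {}"

end

theory Submission
  imports Defs "HOL-Probability.Distributions"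
begin

text \<open>The Gaussian measure on a product space is the product of the Gaussian measures on the
  factors, so by Fubini and the layer-cake formula \<open>\<gamma>(K) = \<integral>\<^sub>0\<^sup>\<infinity> \<gamma>(A\<^sub>z) dz\<close> and
  \<open>\<gamma>(K \<inter> T) = \<integral>\<^sub>0\<^sup>\<infinity> \<gamma>(A\<^sub>z \<inter> T\<^sub>1) dz\<close>, while \<open>\<gamma>(T) = \<gamma>(T\<^sub>1)\<close>. Up to the Gaussian-null
  boundary of a convex set, the cylinder over \<open>conv(A\<^sub>z \<union> T\<^sub>1)\<close> lies in \<open>conv(K \<union> T)\<close>, because
  \<open>T\<close> contains whole vertical lines. Hence the hypothesis gives
  \<open>\<gamma>(A\<^sub>z) \<gamma>(T\<^sub>1) \<le> \<gamma>(conv(K \<union> T)) \<gamma>(A\<^sub>z \<inter> T\<^sub>1)\<close> for every \<open>z > 0\<close>, and integrating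
  over \<open>z\<close> yields the claim.\<close>

definition gaussian_density :: "'a::euclidean_space \<Rightarrow> ennreal" where
  "gaussian_density x = ennreal (exp (- (norm x)\<^sup>2 / 2) / (2 * pi) powr (real DIM('a) / 2))"

text \<open>The restriction of \<open>std_gaussian\<close> to the Borel sets, on which product measures and
  Fubini's theorem are available.\<close>
definition gaussian_lborel :: "'a::euclidean_space measure" where
  "gaussian_lborel = density lborel gaussian_density"

lemma borel_measurable_gaussian_density[measurable]: "gaussian_density \<in> borel_measurable borel"
  unfolding gaussian_density_def[abs_def] by measurable

lemma sets_gaussian_lborel[simp, measurable_cong]: "sets gaussian_lborel = sets borel"
  by (simp add: gaussian_lborel_def)

lemma space_gaussian_lborel[simp]: "space gaussian_lborel = UNIV"
  by (simp add: gaussian_lborel_def)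

lemma gaussian_density_eq_prod_std_normal_density:
  "gaussian_density (x::'a::euclidean_space) = (\<Prod>b\<in>Basis. ennreal (std_normal_density (x \<bullet> b)))"
proof -
  have norm: "(norm x)\<^sup>2 = (\<Sum>b\<in>Basis. (x \<bullet> b)\<^sup>2)"
    unfolding power2_norm_eq_inner by (subst euclidean_inner) (simp add: power2_eq_square)
  have const: "(2 * pi) powr (real DIM('a) / 2) = (\<Prod>b\<in>(Basis::'a set). sqrt (2 * pi))"
    by (simp add: powr_realpow[symmetric] powr_powr powr_half_sqrt[symmetric])
  have "- (\<Sum>b\<in>Basis. (x \<bullet> b)\<^sup>2) / 2 = (\<Sum>b\<in>(Basis::'a set). - (x \<bullet> b)\<^sup>2 / 2)"
    by (simp add: sum_divide_distrib sum_negf)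
  then have exp: "exp (- (\<Sum>b\<in>Basis. (x \<bullet> b)\<^sup>2) / 2) = (\<Prod>b\<in>(Basis::'a set). exp (- (x \<bullet> b)\<^sup>2 / 2))"
    by (simp add: exp_sum)
  have "exp (- (norm x)\<^sup>2 / 2) / (2 * pi) powr (real DIM('a) / 2)
      = (\<Prod>b\<in>Basis. exp (- (x \<bullet> b)\<^sup>2 / 2) / sqrt (2 * pi))"
    unfolding norm const exp by (rule prod_dividef[symmetric])
  also have "\<dots> = (\<Prod>b\<in>Basis. std_normal_density (x \<bullet> b))"
    by (simp add: std_normal_density_def)
  finally show ?thesis
    by (simp add: gaussian_density_def prod_ennreal)
qed

lemma gaussian_density_Pair:
  "gaussian_density ((x::'a::euclidean_space), (y::'b::euclidean_space))
     = gaussian_density x * gaussian_density y"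
proof -
  have exponent: "- (norm (x, y))\<^sup>2 / 2 = - (norm x)\<^sup>2 / 2 + - (norm y)\<^sup>2 / 2"
    by (simp add: norm_Pair)
  have const: "(2 * pi) powr (real DIM('a \<times> 'b) / 2)
      = (2 * pi) powr (real DIM('a) / 2) * (2 * pi) powr (real DIM('b) / 2)"
    by (simp add: powr_add[symmetric] add_divide_distrib)
  have "exp (- (norm (x, y))\<^sup>2 / 2) / (2 * pi) powr (real DIM('a \<times> 'b) / 2)
      = (exp (- (norm x)\<^sup>2 / 2) / (2 * pi) powr (real DIM('a) / 2)) *
        (exp (- (norm y)\<^sup>2 / 2) / (2 * pi) powr (real DIM('b) / 2))"
    unfolding exponent const exp_add by simp
  then show ?thesis
    by (simp add: gaussian_density_def ennreal_mult[symmetric])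
qed

lemma emeasure_gaussian_lborel_UNIV: "emeasure (gaussian_lborel::'a::euclidean_space measure) UNIV = 1"
proof -
  have "prob_space (density lborel (\<lambda>x. ennreal (std_normal_density x)))"
    using prob_space_normal_density[of 1 0] by simp
  then have "emeasure (density lborel (\<lambda>x. ennreal (std_normal_density x))) UNIV = 1"
    using prob_space.emeasure_space_1 by fastforce
  then have std_normal: "(\<integral>\<^sup>+x. ennreal (std_normal_density x) \<partial>lborel) = 1"
    by (simp add: emeasure_density)
  have "emeasure (gaussian_lborel::'a measure) UNIV = (\<integral>\<^sup>+x. gaussian_density x \<partial>(lborel::'a measure))"
    by (simp add: gaussian_lborel_def emeasure_density)
  also have "\<dots> = (\<Prod>b\<in>(Basis::'a set). \<integral>\<^sup>+x. ennreal (std_normal_density x) \<partial>lborel)"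
    unfolding gaussian_density_eq_prod_std_normal_density by (rule nn_integral_lborel_prod) auto
  finally show ?thesis
    by (simp add: std_normal)
qed

interpretation gaussian_lborel: prob_space "gaussian_lborel::'a::euclidean_space measure"
  by (rule prob_spaceI) (simp add: emeasure_gaussian_lborel_UNIV)

lemma gaussian_lborel_Pair:
  "(gaussian_lborel :: ('a::euclidean_space \<times> 'b::euclidean_space) measure)
     = gaussian_lborel \<Otimes>\<^sub>M gaussian_lborel"
proof -
  have "(gaussian_lborel::'a measure) \<Otimes>\<^sub>M (gaussian_lborel::'b measure)
      = density (lborel \<Otimes>\<^sub>M lborel) (\<lambda>(x, y). gaussian_density x * gaussian_density y)"
    unfolding gaussian_lborel_def
    by (rule pair_measure_density)
       (auto intro: prob_space_imp_sigma_finite gaussian_lborel.prob_space_axioms[unfolded gaussian_lborel_def]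
         lborel.sigma_finite_measure_axioms)
  then show ?thesis
    by (simp add: gaussian_lborel_def lborel_prod gaussian_density_Pair[symmetric] case_prod_beta')
qed

lemma std_gaussian_eq_density: "std_gaussian = density lebesgue gaussian_density"
  unfolding std_gaussian_def gaussian_density_def[abs_def] ..

lemma lebesgue_measurable_gaussian_density[measurable]: "gaussian_density \<in> borel_measurable lebesgue"
  by (rule measurable_completion) simp

lemma emeasure_std_gaussian_borel:
  assumes "S \<in> sets borel"
  shows "emeasure std_gaussian S = emeasure gaussian_lborel S"
proof -
  have "emeasure std_gaussian S = (\<integral>\<^sup>+x. gaussian_density x * indicator S x \<partial>lebesgue)"
    using assms by (simp add: std_gaussian_eq_density emeasure_density)
  also have "\<dots> = (\<integral>\<^sup>+x. gaussian_density x * indicator S x \<partial>lborel)"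
    by (rule nn_integral_completion)
  finally show ?thesis
    using assms by (simp add: gaussian_lborel_def emeasure_density)
qed

lemma sets_std_gaussian: "sets std_gaussian = sets lebesgue"
  by (simp add: std_gaussian_eq_density)

lemma gauss_eq_measure_gaussian_lborel: "S \<in> sets borel \<Longrightarrow> gauss S = measure gaussian_lborel S"
  by (simp add: gauss_def measure_def emeasure_std_gaussian_borel)

interpretation std_gaussian: prob_space "std_gaussian::'a::euclidean_space measure"
proof
  have "emeasure (std_gaussian::'a measure) UNIV = emeasure (gaussian_lborel::'a measure) UNIV"
    by (rule emeasure_std_gaussian_borel) simp
  moreover have "space (std_gaussian::'a measure) = UNIV"
    by (simp add: std_gaussian_eq_density)
  ultimately show "emeasure (std_gaussian::'a measure) (space std_gaussian) = 1"
    by (simp add: emeasure_gaussian_lborel_UNIV)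
qed

lemma nn_integral_layer_cake:
  fixes f :: "'a \<Rightarrow> real"
  assumes "sigma_finite_measure M"
    and f[measurable]: "f \<in> borel_measurable M"
    and nonneg: "\<And>x. x \<in> space M \<Longrightarrow> 0 \<le> f x"
  shows "(\<integral>\<^sup>+x. ennreal (f x) \<partial>M) = (\<integral>\<^sup>+z\<in>{0<..}. emeasure M {x \<in> space M. z \<le> f x} \<partial>lborel)"
proof -
  interpret pair_sigma_finite M "lborel::real measure"
    using assms(1) lborel.sigma_finite_measure_axioms by (rule pair_sigma_finite.intro)
  have measurable: "(\<lambda>(x, z). indicator {0<..f x} z :: ennreal) \<in> borel_measurable (M \<Otimes>\<^sub>M lborel)"
    by (simp add: indicator_def case_prod_beta') measurable
  have "(\<integral>\<^sup>+x. ennreal (f x) \<partial>M) = (\<integral>\<^sup>+x. \<integral>\<^sup>+z. indicator {0<..f x} z \<partial>lborel \<partial>M)"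
    by (rule nn_integral_cong) (simp add: nonneg)
  also have "\<dots> = (\<integral>\<^sup>+z. \<integral>\<^sup>+x. indicator {0<..f x} z \<partial>M \<partial>lborel)"
    using Fubini'[OF measurable] by simp
  also have "\<dots> = (\<integral>\<^sup>+z\<in>{0<..}. emeasure M {x \<in> space M. z \<le> f x} \<partial>lborel)"
  proof (rule nn_integral_cong)
    fix z :: real
    show "(\<integral>\<^sup>+x. indicator {0<..f x} z \<partial>M) = emeasure M {x \<in> space M. z \<le> f x} * indicator {0<..} z"
    proof (cases "0 < z")
      case True
      then have "(\<integral>\<^sup>+x. indicator {0<..f x} z \<partial>M) = (\<integral>\<^sup>+x. indicator {x \<in> space M. z \<le> f x} x \<partial>M)"
        by (intro nn_integral_cong) (simp add: indicator_def)
      with True show ?thesis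
        by simp
    qed simp
  qed
  finally show ?thesis .
qed

lemma null_sets_convex_diff_interior:
  fixes C :: "'a::euclidean_space set"
  assumes "convex C"
  shows "C - interior C \<in> null_sets lebesgue"
proof -
  have "C - interior C \<subseteq> frontier C"
    using closure_subset by (auto simp: frontier_def)
  with negligible_convex_frontier[OF assms] show ?thesis
    by (metis negligible_iff_null_sets negligible_subset)
qed

lemma sets_lebesgue_convex:
  fixes C :: "'a::euclidean_space set"
  assumes "convex C"
  shows "C \<in> sets lebesgue"
proof -
  have "C = interior C \<union> (C - interior C)"
    using interior_subset by auto
  then show ?thesis
    using null_sets_convex_diff_interior[OF assms] by (metis borel_open open_interior
        sets.Un sets_completionI_sets sets_lborel null_setsD2)
qed

lemma gauss_convex_eq_gauss_interior:
  fixes C :: "'a::euclidean_space set"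
  assumes "convex C"
  shows "gauss C = gauss (interior C)"
proof -
  have null: "C - interior C \<in> null_sets lebesgue"
    using assms by (rule null_sets_convex_diff_interior)
  then have "AE x in lebesgue. x \<notin> C - interior C"
    by (rule AE_not_in)
  with null have "C - interior C \<in> null_sets std_gaussian"
    unfolding std_gaussian_eq_density by (subst null_sets_density_iff) auto
  then have "measure std_gaussian (C - (C - interior C)) = measure std_gaussian C"
    using sets_lebesgue_convex[OF assms] by (intro measure_Diff_null_set) (simp_all add: std_gaussian_eq_density)
  moreover have "C - (C - interior C) = interior C"
    using interior_subset by auto
  ultimately show ?thesis
    by (simp add: gauss_def)
qed

lemma convex_mem_with_vertical_line:
  fixes H :: "('a::real_vector \<times> 'b::real_vector) set"
  assumes "convex H" and "{t} \<times> UNIV \<subseteq> H" and "(s', y') \<in> H"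
    and "0 \<le> u" and "u < 1"
  shows "((1 - u) *\<^sub>R t + u *\<^sub>R s', y) \<in> H"
proof -
  define w where "w = (1 / (1 - u)) *\<^sub>R (y - u *\<^sub>R y')"
  have "(1 - u) *\<^sub>R (t, w) + u *\<^sub>R (s', y') \<in> H"
    using assms by (intro convexD) auto
  moreover have "(1 - u) *\<^sub>R w + u *\<^sub>R y' = y"
    using \<open>u < 1\<close> by (simp add: w_def)
  ultimately show ?thesis
    by simp
qed

text \<open>An interior point \<open>s\<close> of the base hull is pushed slightly away from a point
  \<open>t \<in> T\<close> to a point \<open>s'\<close> that still lies below the hull of \<open>K\<close>; then \<open>s\<close> lies strictly
  between \<open>t\<close> and \<open>s'\<close>, so the whole vertical line over \<open>s\<close> is reached.\<close>
lemma interior_convex_hull_Times_UNIV_subset: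
  fixes K :: "('a::euclidean_space \<times> 'b::euclidean_space) set"
  assumes "T \<noteq> {}" and "A \<subseteq> fst ` K"
  shows "interior (convex hull (A \<union> T)) \<times> UNIV \<subseteq> convex hull (K \<union> T \<times> UNIV)"
proof clarify
  fix s y
  assume "s \<in> interior (convex hull (A \<union> T))"
  then obtain e where "e > 0" and ball: "ball s e \<subseteq> convex hull (A \<union> T)"
    by (auto simp: mem_interior)
  obtain t where "t \<in> T"
    using assms(1) by blast
  let ?H = "convex hull (K \<union> T \<times> (UNIV::'b set))"
  define d where "d = e / (2 * (norm (s - t) + 1))"
  define s' where "s' = s + d *\<^sub>R (s - t)"
  have "d > 0"
    using \<open>e > 0\<close> unfolding d_def by (intro divide_pos_pos) (auto simp: add_nonneg_pos)
  have "dist s s' = e * (norm (s - t) / (2 * (norm (s - t) + 1)))"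
    using \<open>e > 0\<close> by (simp add: s'_def d_def dist_norm)
  also have "\<dots> < e * 1"
    using \<open>e > 0\<close> by (intro mult_strict_left_mono) (auto simp: divide_less_eq add_nonneg_pos)
  finally have "s' \<in> convex hull (A \<union> T)"
    using ball by auto
  also have "\<dots> \<subseteq> convex hull (fst ` (K \<union> T \<times> UNIV))"
    using assms(2) by (intro hull_mono) (auto simp: image_Un)
  also have "\<dots> = fst ` ?H"
    by (simp add: convex_hull_linear_image linear_fst)
  finally obtain y' where "(s', y') \<in> ?H"
    by force
  define u where "u = 1 / (1 + d)"
  have "((1 - u) *\<^sub>R t + u *\<^sub>R s', y) \<in> ?H"
    using \<open>(s', y') \<in> ?H\<close> \<open>t \<in> T\<close> \<open>d > 0\<close>
    by (intro convex_mem_with_vertical_line) (auto simp: u_def intro: hull_inc)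
  moreover have "(1 - u) *\<^sub>R t + u *\<^sub>R s' = s"
  proof -
    have "(1 - u) *\<^sub>R t + u *\<^sub>R s' = (1 - u * (1 + d)) *\<^sub>R t + (u * (1 + d)) *\<^sub>R s"
      by (simp add: s'_def algebra_simps)
    also have "u * (1 + d) = 1"
      using \<open>d > 0\<close> by (simp add: u_def)
    finally show ?thesis
      by simp
  qed
  ultimately show "(s, y) \<in> ?H"
    by simp
qed

lemma emeasure_gaussian_lborel_eq_nn_integral_fibres:
  fixes B :: "('a::euclidean_space \<times> 'b::euclidean_space) set"
  assumes "B \<in> sets borel"
  shows "emeasure gaussian_lborel B = (\<integral>\<^sup>+s. emeasure gaussian_lborel (Pair s -` B) \<partial>gaussian_lborel)"
proof -
  have "B \<in> sets ((gaussian_lborel::'a measure) \<Otimes>\<^sub>M (gaussian_lborel::'b measure))"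
    using assms by (subst gaussian_lborel_Pair[symmetric]) simp
  then show ?thesis
    by (subst gaussian_lborel_Pair) (rule gaussian_lborel.emeasure_pair_measure_alt)
qed

lemma gauss_Times_UNIV:
  assumes "A \<in> sets borel"
  shows "gauss (A \<times> (UNIV::'b::euclidean_space set)) = gauss (A::'a::euclidean_space set)"
proof -
  have "emeasure (gaussian_lborel::('a \<times> 'b) measure) (A \<times> UNIV)
      = emeasure gaussian_lborel A * emeasure (gaussian_lborel::'b measure) UNIV"
    by (subst gaussian_lborel_Pair) (rule gaussian_lborel.emeasure_pair_measure_Times; simp add: assms)
  moreover have "A \<times> (UNIV::'b set) \<in> sets borel"
    using assms by (simp add: borel_prod[symmetric])
  ultimately show ?thesis
    using assms by (simp add: gauss_eq_measure_gaussian_lborel measure_def emeasure_gaussian_lborel_UNIV)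
qed

lemma gauss_convex_hull_le_cylinder_hull:
  fixes K :: "('a::euclidean_space \<times> 'b::euclidean_space) set"
  assumes "T \<noteq> {}" and "A \<subseteq> fst ` K"
  shows "gauss (convex hull (A \<union> T)) \<le> gauss (convex hull (K \<union> T \<times> UNIV))"
proof -
  let ?C = "convex hull (A \<union> T)"
  have "gauss ?C = gauss (interior ?C)"
    by (simp add: gauss_convex_eq_gauss_interior[of ?C])
  also have "\<dots> = gauss (interior ?C \<times> (UNIV::'b set))"
    by (simp add: gauss_Times_UNIV borel_open)
  also have "\<dots> \<le> gauss (convex hull (K \<union> T \<times> UNIV))"
    unfolding gauss_def using interior_convex_hull_Times_UNIV_subset[OF assms]
    by (intro std_gaussian.finite_measure_mono) (simp_all add: std_gaussian_eq_density sets_lebesgue_convex)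
  finally show ?thesis .
qed

lemma sets_borel_Pair_vimage:
  fixes K :: "('a::euclidean_space \<times> 'b::euclidean_space) set"
  assumes "K \<in> sets borel"
  shows "Pair s -` K \<in> sets borel"
  using sets_Pair1[of K "gaussian_lborel::'a measure" "gaussian_lborel::'b measure"] assms
  by (subst (asm) gaussian_lborel_Pair[symmetric]) simp

lemma borel_measurable_gauss_fibre:
  fixes K :: "('a::euclidean_space \<times> 'b::euclidean_space) set"
  assumes "K \<in> sets borel"
  shows "(\<lambda>s. gauss (Pair s -` K)) \<in> borel_measurable borel"
proof -
  have "K \<in> sets ((gaussian_lborel::'a measure) \<Otimes>\<^sub>M (gaussian_lborel::'b measure))"
    using assms by (subst gaussian_lborel_Pair[symmetric]) simp
  then have "(\<lambda>s. emeasure (gaussian_lborel::'b measure) (Pair s -` K))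
      \<in> borel_measurable (gaussian_lborel::'a measure)"
    by (rule gaussian_lborel.measurable_emeasure_Pair)
  then show ?thesis
    using assms by (simp add: gauss_eq_measure_gaussian_lborel sets_borel_Pair_vimage measure_def
        measurable_cong_sets[OF sets_gaussian_lborel refl])
qed

lemma borel_measurable_gauss_superlevel_Int:
  fixes f :: "'a::euclidean_space \<Rightarrow> real"
  assumes [measurable]: "f \<in> borel_measurable borel" "T \<in> sets borel"
  shows "(\<lambda>z. gauss ({s. z \<le> f s} \<inter> T)) \<in> borel_measurable borel"
proof -
  have "{s. z \<le> f s} \<inter> T \<in> sets lebesgue" for z
    by (rule sets_completionI_sets) measurable
  then have "mono (\<lambda>z. - gauss ({s. z \<le> f s} \<inter> T))"
    unfolding mono_def gauss_def
    by (auto intro!: std_gaussian.finite_measure_mono simp: sets_std_gaussian)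
  then show ?thesis
    using borel_measurable_mono borel_measurable_uminus_eq by blast
qed

lemma gauss_Int_cylinder_layer_cake:
  fixes K :: "('a::euclidean_space \<times> 'b::euclidean_space) set"
  assumes K[measurable]: "K \<in> sets borel" and T[measurable]: "T \<in> sets borel"
  shows "ennreal (gauss (K \<inter> T \<times> UNIV))
    = (\<integral>\<^sup>+z\<in>{0<..}. ennreal (gauss ({s. z \<le> gauss (Pair s -` K)} \<inter> T)) \<partial>lborel)"
proof -
  define F where "F s = gauss (Pair s -` K)" for s
  have F_eq: "F s = measure gaussian_lborel (Pair s -` K)" for s
    by (simp add: F_def gauss_eq_measure_gaussian_lborel sets_borel_Pair_vimage)
  have [measurable]: "F \<in> borel_measurable borel"
    unfolding F_def using K by (rule borel_measurable_gauss_fibre)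
  have F_nonneg: "0 \<le> F s" for s
    by (simp add: F_def gauss_def)
  have measurable: "(\<lambda>s. F s * indicator T s) \<in> borel_measurable gaussian_lborel"
    by measurable
  have sigma_finite: "sigma_finite_measure (gaussian_lborel::'a measure)"
    by (rule prob_space_imp_sigma_finite) (rule gaussian_lborel.prob_space_axioms)
  have "T \<times> (UNIV::'b set) \<in> sets borel"
    by (simp add: borel_prod[symmetric])
  with K have KT: "K \<inter> T \<times> UNIV \<in> sets borel"
    by (rule sets.Int)
  have "ennreal (gauss (K \<inter> T \<times> UNIV)) = emeasure gaussian_lborel (K \<inter> T \<times> UNIV)"
    by (simp add: gauss_eq_measure_gaussian_lborel KT gaussian_lborel.emeasure_eq_measure)
  also have "\<dots> = (\<integral>\<^sup>+s. ennreal (F s * indicator T s) \<partial>gaussian_lborel)"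
    unfolding emeasure_gaussian_lborel_eq_nn_integral_fibres[OF KT]
    by (intro nn_integral_cong) (simp add: F_eq indicator_def gaussian_lborel.emeasure_eq_measure vimage_def)
  also have "\<dots> = (\<integral>\<^sup>+z\<in>{0<..}. emeasure gaussian_lborel {s. z \<le> F s * indicator T s} \<partial>lborel)"
    by (subst nn_integral_layer_cake[OF sigma_finite measurable]) (simp_all add: F_nonneg)
  also have "\<dots> = (\<integral>\<^sup>+z\<in>{0<..}. ennreal (gauss ({s. z \<le> F s} \<inter> T)) \<partial>lborel)"
  proof (intro nn_integral_cong)
    fix z :: real
    have "0 < z \<Longrightarrow> {s. z \<le> F s * indicator T s} = {s. z \<le> F s} \<inter> T"
      by (auto simp: indicator_def)
    then show "emeasure gaussian_lborel {s. z \<le> F s * indicator T s} * indicator {0<..} z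
        = ennreal (gauss ({s. z \<le> F s} \<inter> T)) * indicator {0<..} z"
      by (cases "0 < z") (simp_all add: gauss_eq_measure_gaussian_lborel gaussian_lborel.emeasure_eq_measure)
  qed
  finally show ?thesis
    by (simp add: F_def)
qed

lemma gauss_cylinder_product_le:
  fixes K :: "('a::euclidean_space \<times> 'b::euclidean_space) set"
  assumes K: "K \<in> sets borel" and T: "T \<in> sets borel" and "0 \<le> c"
    and levels: "\<And>z. 0 < z \<Longrightarrow>
      gauss {s. z \<le> gauss (Pair s -` K)} * gauss T \<le> c * gauss ({s. z \<le> gauss (Pair s -` K)} \<inter> T)"
  shows "gauss K * gauss (T \<times> (UNIV::'b set)) \<le> c * gauss (K \<inter> T \<times> UNIV)"
proof -
  let ?A = "\<lambda>z. {s. z \<le> gauss (Pair s -` K)}"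
  have nonneg: "0 \<le> gauss S" for S :: "'c::euclidean_space set"
    by (simp add: gauss_def)
  have fibre: "(\<lambda>s. gauss (Pair s -` K)) \<in> borel_measurable borel"
    using K by (rule borel_measurable_gauss_fibre)
  have [measurable]: "(\<lambda>z. gauss (?A z)) \<in> borel_measurable borel"
    using borel_measurable_gauss_superlevel_Int[OF fibre, of UNIV] by simp
  have [measurable]: "(\<lambda>z. gauss (?A z \<inter> T)) \<in> borel_measurable borel"
    using fibre T by (rule borel_measurable_gauss_superlevel_Int)
  have "ennreal (gauss K) = (\<integral>\<^sup>+z\<in>{0<..}. ennreal (gauss (?A z)) \<partial>lborel)"
    using gauss_Int_cylinder_layer_cake[OF K, of UNIV] by simp
  then have "ennreal (gauss K * gauss (T \<times> (UNIV::'b set)))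
      = ennreal (gauss T) * (\<integral>\<^sup>+z\<in>{0<..}. ennreal (gauss (?A z)) \<partial>lborel)"
    using T by (simp add: gauss_Times_UNIV ennreal_mult nonneg mult.commute)
  also have "\<dots> = (\<integral>\<^sup>+z\<in>{0<..}. ennreal (gauss (?A z) * gauss T) \<partial>lborel)"
    by (subst nn_integral_cmult[symmetric]) (measurable, simp add: ennreal_mult nonneg mult_ac)
  also have "\<dots> \<le> (\<integral>\<^sup>+z\<in>{0<..}. ennreal (c * gauss (?A z \<inter> T)) \<partial>lborel)"
    by (intro nn_integral_mono) (auto simp: indicator_def intro: ennreal_leI levels)
  also have "\<dots> = ennreal c * (\<integral>\<^sup>+z\<in>{0<..}. ennreal (gauss (?A z \<inter> T)) \<partial>lborel)"
    by (subst nn_integral_cmult[symmetric]) (measurable, simp add: ennreal_mult nonneg \<open>0 \<le> c\<close> mult_ac)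
  also have "\<dots> = ennreal (c * gauss (K \<inter> T \<times> UNIV))"
    using \<open>0 \<le> c\<close> by (simp add: ennreal_mult nonneg gauss_Int_cylinder_layer_cake[OF K T])
  finally show ?thesis
    using \<open>0 \<le> c\<close> by (simp add: nonneg)
qed

theorem lemma3p1:
  fixes K :: "('a::euclidean_space \<times> 'b::euclidean_space) set"
    and T1 :: "'a set"
  assumes K_body: "convex_body K"
    and K_sym: "uminus ` K = K"
    and T1_body: "convex_body T1"
    and hyp: "\<And>z::real. z > 0 \<Longrightarrow>
      (let A = {s \<in> fst ` K. gauss {y. (s, y) \<in> K} \<ge> z} in
        gauss (convex hull (A \<union> T1)) * gauss (A \<inter> T1) \<ge> gauss A * gauss T1)"
  shows "gauss (convex hull (K \<union> T1 \<times> UNIV)) * gauss (K \<inter> T1 \<times> UNIV)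
           \<ge> gauss K * gauss (T1 \<times> (UNIV :: 'b set))"
proof (rule gauss_cylinder_product_le)
  show "K \<in> sets borel" "T1 \<in> sets borel"
    using K_body T1_body by (simp_all add: convex_body_def borel_compact)
  show "0 \<le> gauss (convex hull (K \<union> T1 \<times> UNIV))"
    by (simp add: gauss_def)
  fix z :: real
  assume "0 < z"
  let ?A = "{s. z \<le> gauss (Pair s -` K)}"
  have "?A \<subseteq> fst ` K"
  proof
    fix s
    assume "s \<in> ?A"
    with \<open>0 < z\<close> have "Pair s -` K \<noteq> {}"
      by (auto simp: gauss_def)
    then show "s \<in> fst ` K"
      by force
  qed
  then have "?A = {s \<in> fst ` K. gauss {y. (s, y) \<in> K} \<ge> z}"
    by (auto simp: vimage_def)
  then have "gauss ?A * gauss T1 \<le> gauss (convex hull (?A \<union> T1)) * gauss (?A \<inter> T1)"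
    using hyp[OF \<open>0 < z\<close>] by (simp add: Let_def)
  also have "\<dots> \<le> gauss (convex hull (K \<union> T1 \<times> UNIV)) * gauss (?A \<inter> T1)"
    using T1_body interior_subset \<open>?A \<subseteq> fst ` K\<close>
    by (intro mult_right_mono gauss_convex_hull_le_cylinder_hull) (auto simp: convex_body_def gauss_def)
  finally show "gauss ?A * gauss T1 \<le> gauss (convex hull (K \<union> T1 \<times> UNIV)) * gauss (?A \<inter> T1)" .
qed

end
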